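(* Let $\varepsilon>0$, let $p_{m,n}=u(m\varepsilon)+iv(n\varepsilon)$ be a rectangular lattice and let $G$ be a CR-mapping on it. Define $Q_{m,n}=\frac{p_{m,n+1}-p_{m,n}}{p_{m,n}-p_{m-1,n}}\cdot\frac{G_{m,n}-G_{m-1,n}}{G_{m,n+1}-G_{m,n}}$ and let $F$ be defined by $Q=e^{\varepsilon F}$. Then, at every index $(m,n)$ where the quantities are defined, $$F_{m-1,n+1}-F_{m,n}=M\,(F_{m,n+1}-F_{m-1,n})+2i\varepsilon\,\Xi\,\frac{F_{m,n+1}+F_{m-1,n}}{2}+\varepsilon^2\mathcal R,$$ where, with $a=p_{m,n+1}-p_{m,n}$, $a'=p_{m,n+2}-p_{m,n+1}$, $b=p_{m,n}-p_{m-1,n}$, $b'=p_{m-1,n}-p_{m-2,n}$, $$M=-\frac{b\,b'-a\,a'}{(b'+a)(b+a')},\qquad \Xi=-\frac{b\,a-b'\,a'}{i\varepsilon\,(b'+a)(b+a')},$$ $$\mathcal R=\frac{1}{\varepsilon^3}\Big(\log\frac{a'e^{\varepsilon F_{m,n+1}}+b}{a'+b\,e^{\varepsilon F_{m,n+1}}}+\varepsilon\frac{b-a'}{b+a'}F_{m,n+1}-\log\frac{a\,e^{\varepsilon F_{m-1,n}}+b'}{a+b'e^{\varepsilon F_{m-1,n}}}-\varepsilon\frac{b'-a}{b'+a}F_{m-1,n}\Big).$$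
   Context: $u,v$ are real functions with positive derivatives (so the lattice $p_{m,n}=u(m\varepsilon)+iv(n\varepsilon)$ is a rectangular lattice in $\mathbb C$). The cross-ratio of distinct $q_1,\dots,q_4\in\mathbb C$ is $\mathrm{CR}(q_1,q_2,q_3,q_4)=\frac{(q_1-q_2)(q_3-q_4)}{(q_2-q_3)(q_4-q_1)}$. A CR-mapping $G$ on the lattice satisfies $\mathrm{CR}(G_{m-1,n},G_{m,n},G_{m,n+1},G_{m-1,n+1})=\mathrm{CR}(p_{m-1,n},p_{m,n},p_{m,n+1},p_{m-1,n+1})$ for all rectangles (with the $G$-values involved mutually distinct). In the identity, $F$ and $\log$ are taken with appropriate branches of the complex logarithm (the identity arises by taking the logarithm of a multiplicative identity for $Q$ and dividing by $\varepsilon$). *)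

theory Defs
  imports "HOL-Analysis.Analysis"
begin

definition lattice :: "(real \<Rightarrow> real) \<Rightarrow> (real \<Rightarrow> real) \<Rightarrow> real \<Rightarrow> int \<Rightarrow> int \<Rightarrow> complex" where
  "lattice u v \<epsilon> m n = complex_of_real (u (real_of_int m * \<epsilon>)) + \<i> * complex_of_real (v (real_of_int n * \<epsilon>))"

definition cross_ratio :: "complex \<Rightarrow> complex \<Rightarrow> complex \<Rightarrow> complex \<Rightarrow> complex" where
  "cross_ratio q1 q2 q3 q4 = ((q1 - q2) * (q3 - q4)) / ((q2 - q3) * (q4 - q1))"

definition cr_mapping :: "(real \<Rightarrow> real) \<Rightarrow> (real \<Rightarrow> real) \<Rightarrow> real \<Rightarrow> (int \<Rightarrow> int \<Rightarrow> complex) \<Rightarrow> bool" where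
  "cr_mapping u v \<epsilon> G \<longleftrightarrow>
     (\<forall>m n. distinct [G (m-1) n, G m n, G m (n+1), G (m-1) (n+1)] \<and>
        cross_ratio (G (m-1) n) (G m n) (G m (n+1)) (G (m-1) (n+1)) =
        cross_ratio (lattice u v \<epsilon> (m-1) n) (lattice u v \<epsilon> m n)
                    (lattice u v \<epsilon> m (n+1)) (lattice u v \<epsilon> (m-1) (n+1)))"

definition Qmap :: "(real \<Rightarrow> real) \<Rightarrow> (real \<Rightarrow> real) \<Rightarrow> real \<Rightarrow> (int \<Rightarrow> int \<Rightarrow> complex) \<Rightarrow> int \<Rightarrow> int \<Rightarrow> complex" where
  "Qmap u v \<epsilon> G m n =
     (lattice u v \<epsilon> m (n+1) - lattice u v \<epsilon> m n) / (lattice u v \<epsilon> m n - lattice u v \<epsilon> (m-1) n) *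
     ((G m n - G (m-1) n) / (G m (n+1) - G m n))"

end

(*
  On a rectangle of the lattice with vertical side A and horizontal side B, Q compares the
  bottom edge of the G-quadrilateral with its right edge and P compares it with its left edge.
  Because the four edges close up, the cross-ratio condition yields the Moebius relation
  (A Q + B) / (A + B Q) = P; so the two quotients inside the logarithms of the remainder
  are P_{m,n+1} and P_{m-1,n}. The cross-ratio conditions on the two rectangles
  sharing the edge from G_{m-1,n} to G_{m-1,n+1} give Q_{m-1,n+1} P_{m-1,n} = Q_{m,n} P_{m,n+1},
  hence exp (eps (F_{m-1,n+1} - F_{m,n})) = P_{m,n+1} / P_{m-1,n}. Taking logarithms fixes the
  branch integers, and M and Xi are exactly the coefficients for which the terms linear in
  F_{m,n+1} and F_{m-1,n} cancel against those inside the remainder.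
*)
theory Submission
  imports Defs
begin

lemma cross_ratio_parallelogram:
  assumes "q2 - q1 = q3 - q4" and "q4 - q1 = q3 - q2"
  shows "cross_ratio q1 q2 q3 q4 = (q2 - q1)\<^sup>2 / (q3 - q2)\<^sup>2"
proof -
  have "(q1 - q2) * (q2 - q1) = - (q2 - q1)\<^sup>2" and "(q2 - q3) * (q3 - q2) = - (q3 - q2)\<^sup>2"
    by (simp_all add: power2_eq_square algebra_simps)
  then show ?thesis
    unfolding cross_ratio_def assms(1)[symmetric] assms(2) by simp
qed

lemma quadrilateral_edge_ratio_moebius:
  fixes A B g00 g10 g11 g01 :: complex
  assumes "A \<noteq> 0" "B \<noteq> 0" and "distinct [g00, g10, g11, g01]"
    and cr: "A\<^sup>2 * ((g10 - g00) * (g11 - g01)) = B\<^sup>2 * ((g11 - g10) * (g01 - g00))"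
  defines "Q \<equiv> A / B * ((g10 - g00) / (g11 - g10))"
  shows "(A * Q + B) / (A + B * Q) = A / B * ((g10 - g00) / (g01 - g00))"
proof -
  have nz: "g10 - g00 \<noteq> 0" "g11 - g10 \<noteq> 0" "g01 - g00 \<noteq> 0" "g11 - g00 \<noteq> 0"
    using assms(3) by auto
  have "(A * Q + B) * (B * (g01 - g00)) = (A + B * Q) * (A * (g10 - g00))"
  proof -
    have "(A * Q + B) * (B * (g01 - g00)) * (g11 - g10)
        = A\<^sup>2 * (g10 - g00) * (g01 - g00) + B\<^sup>2 * ((g11 - g10) * (g01 - g00))"
      unfolding Q_def using assms nz by (simp add: field_simps power2_eq_square)
    also have "\<dots> = A\<^sup>2 * (g10 - g00) * ((g01 - g00) + (g11 - g01))"
      unfolding cr[symmetric] by (simp add: algebra_simps)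
    also have "\<dots> = A\<^sup>2 * (g10 - g00) * ((g10 - g00) + (g11 - g10))"
      by simp
    also have "\<dots> = (A + B * Q) * (A * (g10 - g00)) * (g11 - g10)"
      unfolding Q_def using assms nz by (simp add: field_simps power2_eq_square)
    finally show ?thesis
      using nz by simp
  qed
  moreover have "A + B * Q \<noteq> 0"
    unfolding Q_def using assms nz by (simp add: field_simps)
  ultimately have "(A * Q + B) / (A + B * Q) = (A * (g10 - g00)) / (B * (g01 - g00))"
    using assms nz by (simp add: frac_eq_eq)
  then show ?thesis
    by simp
qed

lemma adjacent_quadrilaterals_edge_ratios:
  fixes a a' b b' g00 g10 g20 g01 g11 g21 g12 :: complex
  assumes "a \<noteq> 0" "b \<noteq> 0" "b' \<noteq> 0"
    and "distinct [g00, g10, g11, g01]" "distinct [g10, g20, g21, g11]"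
    and cr_left: "a\<^sup>2 * ((g10 - g00) * (g11 - g01)) = b'\<^sup>2 * ((g11 - g10) * (g01 - g00))"
    and cr_right: "a\<^sup>2 * ((g20 - g10) * (g21 - g11)) = b\<^sup>2 * ((g21 - g20) * (g11 - g10))"
  shows "a' / b' * ((g11 - g01) / (g12 - g11)) * (a / b' * ((g10 - g00) / (g01 - g00)))
       = a / b * ((g20 - g10) / (g21 - g20)) * (a' / b * ((g21 - g11) / (g12 - g11)))"
proof -
  have nz: "g01 - g00 \<noteq> 0" "g21 - g20 \<noteq> 0"
    using assms(4,5) by auto
  have left: "a / b' * ((g10 - g00) / (g01 - g00)) * (g11 - g01) = b' * (g11 - g10) / a"
    using assms(1,3) nz cr_left by (simp add: field_simps power2_eq_square)
  have right: "a / b * ((g20 - g10) / (g21 - g20)) * (g21 - g11) = b * (g11 - g10) / a"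
    using assms(1,2) nz cr_right by (simp add: field_simps power2_eq_square)
  have "a' / b' * ((g11 - g01) / (g12 - g11)) * (a / b' * ((g10 - g00) / (g01 - g00)))
      = a' / (b' * (g12 - g11)) * (a / b' * ((g10 - g00) / (g01 - g00)) * (g11 - g01))"
    by simp
  also have "\<dots> = a' / (b * (g12 - g11)) * (a / b * ((g20 - g10) / (g21 - g20)) * (g21 - g11))"
    unfolding left right using assms(2,3) by simp
  also have "\<dots> = a / b * ((g20 - g10) / (g21 - g20)) * (a' / b * ((g21 - g11) / (g12 - g11)))"
    by (simp add: ac_simps)
  finally show ?thesis .
qed

lemma lattice_diff_column:
  "lattice u v \<epsilon> j l - lattice u v \<epsilon> j k
     = \<i> * complex_of_real (v (real_of_int l * \<epsilon>) - v (real_of_int k * \<epsilon>))"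
  unfolding lattice_def by (simp add: algebra_simps)

lemma lattice_diff_row:
  "lattice u v \<epsilon> l k - lattice u v \<epsilon> j k
     = complex_of_real (u (real_of_int l * \<epsilon>) - u (real_of_int j * \<epsilon>))"
  unfolding lattice_def by simp

lemma lattice_cross_ratio:
  "cross_ratio (lattice u v \<epsilon> (j-1) k) (lattice u v \<epsilon> j k)
               (lattice u v \<epsilon> j (k+1)) (lattice u v \<epsilon> (j-1) (k+1))
     = (lattice u v \<epsilon> j k - lattice u v \<epsilon> (j-1) k)\<^sup>2
       / (lattice u v \<epsilon> j (k+1) - lattice u v \<epsilon> j k)\<^sup>2"
  by (rule cross_ratio_parallelogram) (simp_all add: lattice_diff_row lattice_diff_column)

text \<open>The lattice sides are nonzero because the cross-ratio of four distinct points is nonzero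
  (and \<open>x / 0 = 0\<close>).\<close>

lemma cr_mapping_rectangle:
  fixes j k :: int
  assumes "cr_mapping u v \<epsilon> G"
  defines "A \<equiv> lattice u v \<epsilon> j (k+1) - lattice u v \<epsilon> j k"
    and "B \<equiv> lattice u v \<epsilon> j k - lattice u v \<epsilon> (j-1) k"
  shows "distinct [G (j-1) k, G j k, G j (k+1), G (j-1) (k+1)]"
    and "A \<noteq> 0" and "B \<noteq> 0"
    and "A\<^sup>2 * ((G j k - G (j-1) k) * (G j (k+1) - G (j-1) (k+1)))
       = B\<^sup>2 * ((G j (k+1) - G j k) * (G (j-1) (k+1) - G (j-1) k))"
proof -
  from assms(1) show dist: "distinct [G (j-1) k, G j k, G j (k+1), G (j-1) (k+1)]"
    unfolding cr_mapping_def by blast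
  have cr: "cross_ratio (G (j-1) k) (G j k) (G j (k+1)) (G (j-1) (k+1)) = B\<^sup>2 / A\<^sup>2"
    using assms(1) unfolding cr_mapping_def A_def B_def lattice_cross_ratio by blast
  have "cross_ratio (G (j-1) k) (G j k) (G j (k+1)) (G (j-1) (k+1)) \<noteq> 0"
    using dist unfolding cross_ratio_def by auto
  with cr show A: "A \<noteq> 0" and "B \<noteq> 0"
    by auto
  have "(G j k - G j (k+1)) * (G (j-1) (k+1) - G (j-1) k) \<noteq> 0"
    using dist by auto
  then have "((G (j-1) k - G j k) * (G j (k+1) - G (j-1) (k+1))) * A\<^sup>2
      = B\<^sup>2 * ((G j k - G j (k+1)) * (G (j-1) (k+1) - G (j-1) k))"
    using cr A unfolding cross_ratio_def by (simp add: frac_eq_eq)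
  then show "A\<^sup>2 * ((G j k - G (j-1) k) * (G j (k+1) - G (j-1) (k+1)))
       = B\<^sup>2 * ((G j (k+1) - G j k) * (G (j-1) (k+1) - G (j-1) k))"
    by (simp add: algebra_simps)
qed

lemma cr_mapping_side_sum_nonzero:
  assumes "cr_mapping u v \<epsilon> G"
  shows "(lattice u v \<epsilon> j k - lattice u v \<epsilon> (j-1) k) + (lattice u v \<epsilon> i l - lattice u v \<epsilon> i r) \<noteq> 0"
  using cr_mapping_rectangle(3)[OF assms, of j k]
  unfolding lattice_diff_row lattice_diff_column by (simp add: complex_eq_iff)

definition Pmap :: "(real \<Rightarrow> real) \<Rightarrow> (real \<Rightarrow> real) \<Rightarrow> real \<Rightarrow> (int \<Rightarrow> int \<Rightarrow> complex) \<Rightarrow> int \<Rightarrow> int \<Rightarrow> complex" where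
  "Pmap u v \<epsilon> G m n =
     (lattice u v \<epsilon> m (n+1) - lattice u v \<epsilon> m n) / (lattice u v \<epsilon> m n - lattice u v \<epsilon> (m-1) n) *
     ((G m n - G (m-1) n) / (G (m-1) (n+1) - G (m-1) n))"

lemma cr_mapping_Pmap_nonzero:
  assumes "cr_mapping u v \<epsilon> G"
  shows "Pmap u v \<epsilon> G j k \<noteq> 0"
  using cr_mapping_rectangle[OF assms, of j k] unfolding Pmap_def by auto

lemma cr_mapping_Qmap_moebius:
  fixes i j k l :: int
  assumes "cr_mapping u v \<epsilon> G"
  defines "A \<equiv> lattice u v \<epsilon> i (k+1) - lattice u v \<epsilon> i k"
    and "B \<equiv> lattice u v \<epsilon> j l - lattice u v \<epsilon> (j-1) l"
  shows "(A * Qmap u v \<epsilon> G j k + B) / (A + B * Qmap u v \<epsilon> G j k) = Pmap u v \<epsilon> G j k"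
proof -
  note rect = cr_mapping_rectangle[OF assms(1), of j k]
  from quadrilateral_edge_ratio_moebius[OF rect(2,3,1,4)] show ?thesis
    unfolding Qmap_def Pmap_def A_def B_def by (simp only: lattice_diff_row lattice_diff_column)
qed

lemma cr_mapping_Qmap_Pmap:
  assumes "cr_mapping u v \<epsilon> G"
  shows "Qmap u v \<epsilon> G (j-1) (k+1) * Pmap u v \<epsilon> G (j-1) k = Qmap u v \<epsilon> G j k * Pmap u v \<epsilon> G j (k+1)"
proof -
  note left = cr_mapping_rectangle[OF assms, of "j-1" k, unfolded lattice_diff_row lattice_diff_column]
  note right = cr_mapping_rectangle[OF assms, of j k, unfolded lattice_diff_row lattice_diff_column]
  from adjacent_quadrilaterals_edge_ratios[OF right(2,3) left(3,1) right(1) left(4) right(4),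
      of "lattice u v \<epsilon> (j-1) (k+1+1) - lattice u v \<epsilon> (j-1) (k+1)" "G (j-1) (k+1+1)"]
  show ?thesis
    unfolding Qmap_def Pmap_def by (simp only: lattice_diff_row lattice_diff_column)
qed

lemma cr_mapping_exp_diff:
  assumes "cr_mapping u v \<epsilon> G"
    and Q: "\<And>j k. exp (e * F j k) = Qmap u v \<epsilon> G j k"
  shows "exp (e * (F (j-1) (k+1) - F j k)) = Pmap u v \<epsilon> G j (k+1) / Pmap u v \<epsilon> G (j-1) k"
proof -
  have "Qmap u v \<epsilon> G j k \<noteq> 0"
    unfolding Q[symmetric] by simp
  with cr_mapping_Qmap_Pmap[OF assms(1), of j k] cr_mapping_Pmap_nonzero[OF assms(1), of "j-1" k]
  show ?thesis
    by (simp add: right_diff_distrib exp_diff Q field_simps)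
qed

lemma exp_eq_quotient_Ln:
  fixes z w1 w2 :: complex
  assumes "exp z = w1 / w2" "w1 \<noteq> 0" "w2 \<noteq> 0"
  obtains k :: int where "z = Ln w1 + 2 * pi * \<i> * of_int k - Ln w2"
proof -
  have "exp z = exp (Ln w1 - Ln w2)"
    using assms by (simp add: exp_diff)
  then obtain k :: int where "z = Ln w1 - Ln w2 + of_int (2 * k) * pi * \<i>"
    unfolding exp_eq by blast
  then show thesis
    by (intro that[of k]) (simp add: algebra_simps)
qed

lemma remainder_identity:
  fixes e a a' b b' F1 F2 Fc Fd l1 l2 :: complex
  assumes "e \<noteq> 0" "b + a' \<noteq> 0" "b' + a \<noteq> 0"
    and log: "e * (Fd - Fc) = l1 - l2"
  defines "M \<equiv> - (b * b' - a * a') / ((b' + a) * (b + a'))"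
    and "\<Xi> \<equiv> - (b * a - b' * a') / (\<i> * e * (b' + a) * (b + a'))"
  shows "Fd - Fc = M * (F1 - F2) + 2 * \<i> * e * \<Xi> * ((F1 + F2) / 2)
    + e ^ 2 * ((1 / e ^ 3) * (l1 + e * (b - a') / (b + a') * F1 - l2 - e * (b' - a) / (b' + a) * F2))"
proof -
  have i_e_\<Xi>: "\<i> * e * \<Xi> = - (b * a - b' * a') / ((b' + a) * (b + a'))"
  proof -
    have "\<i> * e * \<Xi> = (\<i> * e) * (- (b * a - b' * a')) / ((\<i> * e) * ((b' + a) * (b + a')))"
      unfolding \<Xi>_def by (simp add: mult.assoc)
    then show ?thesis
      using assms(1) by simp
  qed
  have coeff_F1: "M + \<i> * e * \<Xi> + (b - a') / (b + a') = 0"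
  proof -
    have "M + \<i> * e * \<Xi> + (b - a') / (b + a')
        = (- (b * b' - a * a') - (b * a - b' * a') + (b - a') * (b' + a)) / ((b' + a) * (b + a'))"
      unfolding i_e_\<Xi> M_def using assms(3) by (simp add: add_divide_distrib diff_divide_distrib)
    then show ?thesis
      by (simp add: algebra_simps)
  qed
  have coeff_F2: "- M + \<i> * e * \<Xi> - (b' - a) / (b' + a) = 0"
  proof -
    have "- M + \<i> * e * \<Xi> - (b' - a) / (b' + a)
        = ((b * b' - a * a') - (b * a - b' * a') - (b' - a) * (b + a')) / ((b' + a) * (b + a'))"
      unfolding i_e_\<Xi> M_def using assms(2) by (simp add: add_divide_distrib diff_divide_distrib)
    then show ?thesis
      by (simp add: algebra_simps)
  qed
  have "M * (F1 - F2) + 2 * \<i> * e * \<Xi> * ((F1 + F2) / 2)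
      + e ^ 2 * ((1 / e ^ 3) * (l1 + e * (b - a') / (b + a') * F1 - l2 - e * (b' - a) / (b' + a) * F2))
    = F1 * (M + \<i> * e * \<Xi> + (b - a') / (b + a')) + F2 * (- M + \<i> * e * \<Xi> - (b' - a) / (b' + a))
      + (l1 - l2) / e"
    using assms(1) by (simp add: field_simps power3_eq_cube power2_eq_square)
  also have "\<dots> = Fd - Fc"
    unfolding coeff_F1 coeff_F2 log[symmetric] using assms(1) by simp
  finally show ?thesis ..
qed

theorem theorem3p1:
  fixes u v :: "real \<Rightarrow> real" and \<epsilon> :: real
    and G F :: "int \<Rightarrow> int \<Rightarrow> complex" and m n :: int
  assumes eps: "\<epsilon> > 0"
    and u_deriv: "\<forall>x. u differentiable (at x) \<and> deriv u x > 0"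
    and v_deriv: "\<forall>x. v differentiable (at x) \<and> deriv v x > 0"
    and CR: "cr_mapping u v \<epsilon> G"
    and F_def: "\<forall>j k. exp (complex_of_real \<epsilon> * F j k) = Qmap u v \<epsilon> G j k"
  shows
    "let p = lattice u v \<epsilon>; e = complex_of_real \<epsilon>;
         a = p m (n+1) - p m n; a' = p m (n+2) - p m (n+1);
         b = p m n - p (m-1) n; b' = p (m-1) n - p (m-2) n;
         F1 = F m (n+1); F2 = F (m-1) n;
         M = - (b * b' - a * a') / ((b' + a) * (b + a'));
         \<Xi> = - (b * a - b' * a') / (\<i> * e * (b' + a) * (b + a'))
     in \<exists>k1 k2 :: int.
          let R = (1 / e ^ 3) *
                  ((Ln ((a' * exp (e * F1) + b) / (a' + b * exp (e * F1))) + 2 * pi * \<i> * of_int k1)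
                   + e * (b - a') / (b + a') * F1
                   - (Ln ((a * exp (e * F2) + b') / (a + b' * exp (e * F2))) + 2 * pi * \<i> * of_int k2)
                   - e * (b' - a) / (b' + a) * F2)
          in F (m-1) (n+1) - F m n = M * (F1 - F2) + 2 * \<i> * e * \<Xi> * ((F1 + F2) / 2) + e ^ 2 * R"
proof -
  let ?p = "lattice u v \<epsilon>" and ?e = "complex_of_real \<epsilon>"
  have Q: "exp (?e * F j k) = Qmap u v \<epsilon> G j k" for j k
    using F_def by blast
  have X1: "((?p m (n+2) - ?p m (n+1)) * exp (?e * F m (n+1)) + (?p m n - ?p (m-1) n))
      / ((?p m (n+2) - ?p m (n+1)) + (?p m n - ?p (m-1) n) * exp (?e * F m (n+1)))
      = Pmap u v \<epsilon> G m (n+1)"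
    using cr_mapping_Qmap_moebius[OF CR, of m "n+1" m n] unfolding Q by (simp add: add.commute)
  have X2: "((?p m (n+1) - ?p m n) * exp (?e * F (m-1) n) + (?p (m-1) n - ?p (m-2) n))
      / ((?p m (n+1) - ?p m n) + (?p (m-1) n - ?p (m-2) n) * exp (?e * F (m-1) n))
      = Pmap u v \<epsilon> G (m-1) n"
    using cr_mapping_Qmap_moebius[OF CR, of m n "m-1" n] unfolding Q by simp
  obtain k :: int where log: "?e * (F (m-1) (n+1) - F m n)
      = Ln (Pmap u v \<epsilon> G m (n+1)) + 2 * pi * \<i> * of_int k - Ln (Pmap u v \<epsilon> G (m-1) n)"
    using cr_mapping_exp_diff[OF CR Q] cr_mapping_Pmap_nonzero[OF CR] cr_mapping_Pmap_nonzero[OF CR]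
    by (rule exp_eq_quotient_Ln)
  have "?e \<noteq> 0"
    using eps by simp
  moreover have "(?p m n - ?p (m-1) n) + (?p m (n+2) - ?p m (n+1)) \<noteq> 0"
    and "(?p (m-1) n - ?p (m-2) n) + (?p m (n+1) - ?p m n) \<noteq> 0"
    using cr_mapping_side_sum_nonzero[OF CR, of m n] cr_mapping_side_sum_nonzero[OF CR, of "m-1" n]
    by simp_all
  ultimately show ?thesis
    unfolding Let_def X1 X2
    by (intro exI[of _ k] exI[of _ 0] remainder_identity) (simp_all add: log)
qed

end
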